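(* For a (Hausdorff) space $X$ the following are equivalent: (i) For every topological vector space $E$, each convex-valued totally-l.s.c. mapping $\Phi:X\rightrightarrows E$ has a continuous selection. (ii) For every set $\mathcal{A}$, each convex-valued totally-l.s.c. mapping $\Phi:X\rightrightarrows\mathbf{c}_{00}(\mathcal{A})$ has a continuous selection (continuity with respect to the norm $\|\cdot\|_1$). (iii) Each open cover of $X$ has an index-subordinated partition of unity. (iv) For every vector space $E$, each convex-valued totally-l.s.c. mapping $\Phi:X\rightrightarrows E$ has a selection which is continuous with respect to the finite topology on $E$.
   Context: A set-valued mapping $\Phi:X\rightrightarrows Y$ assigns to each $x\in X$ a nonempty $\Phi(x)\subseteq Y$; it is convex-valued if each $\Phi(x)$ is convex, and totally-l.s.c. if $\{x:\Phi(x)\cap U\ne\emptyset\}$ is open for every subset $U\subseteq Y$ (no topology on $Y$ is used). A selection is a map $f$ with $f(x)\in\Phi(x)$ for all $x$. $\mathbf{c}_{00}(\mathcal{A})$ is the space of finitely supported functions $\mathcal{A}\to\mathbb{R}$ with $\|y\|_1=\sum|y(\alpha)|$. The finite topology on a vector space $E$: $U$ is open iff $U\cap L$ is open in $L$ for each finite-dimensional linear subspace $L$ (Euclidean topology). An open cover of $X$ indexed by a set $\mathcal{A}$ is a family $\{U_\alpha\}_{\alpha\in\mathcal{A}}$ of open sets with union $X$. A partition of unity indexed by $\mathcal{A}$ is a family of continuous $\xi_\alpha:X\to[0,1]$ with $\sum_\alpha\xi_\alpha(x)=1$ for each $x$ (only countably many nonzero at each $x$, series converging to $1$); it is index-subordinated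 to $\{U_\alpha\}$ if $\{x:\xi_\alpha(x)\ne0\}\subseteq U_\alpha$ for every $\alpha$. *)

theory Defs
  imports "HOL-Analysis.Analysis" "HOL-Library.Function_Algebras"
begin

text \<open>Real functions \<open>'i \<Rightarrow> real\<close> form a real vector space pointwise (needed so that
  c00(A) is a linear subspace of a real vector space type).\<close>
instantiation "fun" :: (type, real_vector) real_vector
begin
definition scaleR_fun :: "real \<Rightarrow> ('a \<Rightarrow> 'b) \<Rightarrow> 'a \<Rightarrow> 'b" where
  "scaleR_fun r f = (\<lambda>x. r *\<^sub>R f x)"
instance
  by standard (simp_all add: scaleR_fun_def fun_eq_iff scaleR_add_right scaleR_add_left)
end

text \<open>Set-valued mappings \<open>\<Phi> : X \<rightrightarrows> E\<close> are modelled as functions \<open>\<Phi> :: 'a \<Rightarrow> 'e set\<close>,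
  considered on the points of \<open>topspace X\<close>.  A vector space \<open>E\<close> is a linear subspace
  \<open>S\<close> of a real vector space type \<open>'e\<close>.\<close>

definition nonempty_valued :: "'a topology \<Rightarrow> ('a \<Rightarrow> 'e set) \<Rightarrow> bool" where
  "nonempty_valued X \<Phi> \<longleftrightarrow> (\<forall>x\<in>topspace X. \<Phi> x \<noteq> {})"

definition convex_valued :: "'a topology \<Rightarrow> ('a \<Rightarrow> 'e::real_vector set) \<Rightarrow> bool" where
  "convex_valued X \<Phi> \<longleftrightarrow> (\<forall>x\<in>topspace X. convex (\<Phi> x))"

text \<open>totally lower semicontinuous: no topology on the target is used\<close>
definition totally_lsc :: "'a topology \<Rightarrow> ('a \<Rightarrow> 'e set) \<Rightarrow> bool" where
  "totally_lsc X \<Phi> \<longleftrightarrow> (\<forall>U. openin X {x \<in> topspace X. \<Phi> x \<inter> U \<noteq> {}})"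

definition is_selection :: "'a topology \<Rightarrow> ('a \<Rightarrow> 'e set) \<Rightarrow> ('a \<Rightarrow> 'e) \<Rightarrow> bool" where
  "is_selection X \<Phi> f \<longleftrightarrow> (\<forall>x\<in>topspace X. f x \<in> \<Phi> x)"

definition setvalued_into :: "'a topology \<Rightarrow> 'e set \<Rightarrow> ('a \<Rightarrow> 'e set) \<Rightarrow> bool" where
  "setvalued_into X S \<Phi> \<longleftrightarrow> nonempty_valued X \<Phi> \<and> (\<forall>x\<in>topspace X. \<Phi> x \<subseteq> S)"

definition is_tvs :: "'e::real_vector set \<Rightarrow> 'e topology \<Rightarrow> bool" where
  "is_tvs S T \<longleftrightarrow> subspace S \<and> topspace T = S \<and>
     continuous_map (prod_topology T T) T (\<lambda>(u, v). u + v) \<and>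
     continuous_map (prod_topology euclideanreal T) T (\<lambda>(a, v). a *\<^sub>R v)"

definition c00 :: "'i set \<Rightarrow> ('i \<Rightarrow> real) set" where
  "c00 A = {y. finite {\<alpha>. y \<alpha> \<noteq> 0} \<and> {\<alpha>. y \<alpha> \<noteq> 0} \<subseteq> A}"

definition l1norm :: "('i \<Rightarrow> real) \<Rightarrow> real" where
  "l1norm y = (\<Sum>\<alpha>\<in>{\<alpha>. y \<alpha> \<noteq> 0}. \<bar>y \<alpha>\<bar>)"

definition c00_topology :: "'i set \<Rightarrow> ('i \<Rightarrow> real) topology" where
  "c00_topology A = Metric_space.mtopology (c00 A) (\<lambda>y z. l1norm (y - z))"

definition fin_dim_subspace :: "'e::real_vector set \<Rightarrow> bool" where
  "fin_dim_subspace L \<longleftrightarrow> subspace L \<and> (\<exists>B. finite B \<and> span B = L)"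

definition euclidean_top_on :: "'e::real_vector set \<Rightarrow> 'e topology" where
  "euclidean_top_on L = topology (\<lambda>V. V \<subseteq> L \<and>
     (\<forall>B. finite B \<and> independent B \<and> span B = L \<longrightarrow>
        openin (powertop_real B)
          {c \<in> topspace (powertop_real B). (\<Sum>b\<in>B. c b *\<^sub>R b) \<in> V}))"

definition finite_topology :: "'e::real_vector set \<Rightarrow> 'e topology" where
  "finite_topology S = topology (\<lambda>U. U \<subseteq> S \<and>
     (\<forall>L. fin_dim_subspace L \<and> L \<subseteq> S \<longrightarrow> openin (euclidean_top_on L) (U \<inter> L)))"

text \<open>Conditions (i)--(iv).  Each is parametrised by the type of the ambient objects;
  the proper-class quantifiers of the paper become "for all types" at theorem level.\<close>

definition cond_i :: "'a topology \<Rightarrow> 'e::real_vector itself \<Rightarrow> bool" where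
  "cond_i X (_::'e itself) \<longleftrightarrow>
     (\<forall>(S::'e set) T. is_tvs S T \<longrightarrow>
       (\<forall>\<Phi>. setvalued_into X S \<Phi> \<and> convex_valued X \<Phi> \<and> totally_lsc X \<Phi> \<longrightarrow>
          (\<exists>f. continuous_map X T f \<and> is_selection X \<Phi> f)))"

definition cond_ii :: "'a topology \<Rightarrow> 'i itself \<Rightarrow> bool" where
  "cond_ii X (_::'i itself) \<longleftrightarrow>
     (\<forall>A::'i set. \<forall>\<Phi>. setvalued_into X (c00 A) \<Phi> \<and> convex_valued X \<Phi> \<and> totally_lsc X \<Phi> \<longrightarrow>
        (\<exists>f. continuous_map X (c00_topology A) f \<and> is_selection X \<Phi> f))"

definition open_cover_indexed :: "'a topology \<Rightarrow> 'i set \<Rightarrow> ('i \<Rightarrow> 'a set) \<Rightarrow> bool" where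
  "open_cover_indexed X A U \<longleftrightarrow> (\<forall>\<alpha>\<in>A. openin X (U \<alpha>)) \<and> (\<Union>\<alpha>\<in>A. U \<alpha>) = topspace X"

definition partition_of_unity :: "'a topology \<Rightarrow> 'i set \<Rightarrow> ('i \<Rightarrow> 'a \<Rightarrow> real) \<Rightarrow> bool" where
  "partition_of_unity X A \<xi> \<longleftrightarrow>
     (\<forall>\<alpha>\<in>A. continuous_map X euclideanreal (\<xi> \<alpha>) \<and> (\<forall>x\<in>topspace X. 0 \<le> \<xi> \<alpha> x \<and> \<xi> \<alpha> x \<le> 1)) \<and>
     (\<forall>x\<in>topspace X. countable {\<alpha>\<in>A. \<xi> \<alpha> x \<noteq> 0} \<and> ((\<lambda>\<alpha>. \<xi> \<alpha> x) has_sum 1) A)"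

definition index_subordinated :: "'a topology \<Rightarrow> 'i set \<Rightarrow> ('i \<Rightarrow> 'a \<Rightarrow> real) \<Rightarrow> ('i \<Rightarrow> 'a set) \<Rightarrow> bool" where
  "index_subordinated X A \<xi> U \<longleftrightarrow> (\<forall>\<alpha>\<in>A. {x \<in> topspace X. \<xi> \<alpha> x \<noteq> 0} \<subseteq> U \<alpha>)"

definition cond_iii :: "'a topology \<Rightarrow> 'i itself \<Rightarrow> bool" where
  "cond_iii X (_::'i itself) \<longleftrightarrow>
     (\<forall>(A::'i set) U. open_cover_indexed X A U \<longrightarrow>
        (\<exists>\<xi>. partition_of_unity X A \<xi> \<and> index_subordinated X A \<xi> U))"

definition cond_iv :: "'a topology \<Rightarrow> 'e::real_vector itself \<Rightarrow> bool" where
  "cond_iv X (_::'e itself) \<longleftrightarrow>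
     (\<forall>S::'e set. subspace S \<longrightarrow>
       (\<forall>\<Phi>. setvalued_into X S \<Phi> \<and> convex_valued X \<Phi> \<and> totally_lsc X \<Phi> \<longrightarrow>
          (\<exists>f. continuous_map X (finite_topology S) f \<and> is_selection X \<Phi> f)))"

end

theory Submission
  imports Defs
begin

text \<open>
  (i) implies (ii) because c00(A) with the l1 norm is a topological vector space.

  For (ii) or (iv) implies (iii), send each point x to the simplex of probability vectors
  y in c00(A) with \<open>y \<alpha> \<noteq> 0 \<Longrightarrow> x \<in> U \<alpha>\<close>. This map is convex-valued and totally l.s.c.,
  and since every coordinate functional is continuous for the l1 norm as well as for the finite
  topology, the coordinates of a continuous selection form an index-subordinated partition of unity.

  For (iii) implies (i) and (iv), cover X by the open sets \<open>{x. y \<in> \<Phi> x}\<close>, \<open>y \<in> E\<close>, and take an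
  index-subordinated partition of unity \<open>\<xi>\<close>. It need not be locally finite, but the family
  \<open>max 0 (\<xi> y - s / 2)\<close>, with \<open>s\<close> the pointwise supremum of \<open>\<xi>\<close>, is: near each point almost
  all of the mass of \<open>\<xi>\<close> is carried by finitely many indices, so all others stay below \<open>s / 2\<close>. Normalising this family gives a selection that is locally a
  finite linear combination of fixed vectors with continuous coefficients, hence continuous for
  every vector topology and for the finite topology.
\<close>

section \<open>The finite topology\<close>

lemma istopology_open_preimages:
  "istopology (\<lambda>V. V \<subseteq> S \<and> (\<forall>i. P i \<longrightarrow> openin (Y i) {y \<in> D i. g i y \<in> V}))"
proof -
  have "{y \<in> D i. g i y \<in> U \<inter> V} = {y \<in> D i. g i y \<in> U} \<inter> {y \<in> D i. g i y \<in> V}" for i U V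
    by blast
  moreover have "{y \<in> D i. g i y \<in> \<Union>K} = (\<Union>V\<in>K. {y \<in> D i. g i y \<in> V})" for i K
    by blast
  ultimately show ?thesis
    unfolding istopology_def by auto
qed

lemma openin_euclidean_top_on:
  "openin (euclidean_top_on L) V \<longleftrightarrow> V \<subseteq> L \<and>
     (\<forall>B. finite B \<and> independent B \<and> span B = L \<longrightarrow>
        openin (powertop_real B) {c \<in> topspace (powertop_real B). (\<Sum>b\<in>B. c b *\<^sub>R b) \<in> V})"
  unfolding euclidean_top_on_def by (simp add: istopology_open_preimages)

lemma openin_finite_topology:
  "openin (finite_topology S) U \<longleftrightarrow> U \<subseteq> S \<and>
     (\<forall>L. fin_dim_subspace L \<and> L \<subseteq> S \<longrightarrow> openin (euclidean_top_on L) (U \<inter> L))"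
proof -
  have Int_eq: "U \<inter> L = {y \<in> L. y \<in> U}" for U L :: "'a set"
    by blast
  have "finite_topology S = topology (\<lambda>U. U \<subseteq> S \<and>
     (\<forall>L. fin_dim_subspace L \<and> L \<subseteq> S \<longrightarrow> openin (euclidean_top_on L) {y \<in> L. y \<in> U}))"
    unfolding finite_topology_def Int_eq ..
  then show ?thesis
    by (simp add: Int_eq istopology_open_preimages[where g="\<lambda>_ y. y" and D="\<lambda>L. L", simplified])
qed

lemma topspace_euclidean_top_on: "topspace (euclidean_top_on L) = L"
proof -
  have "openin (euclidean_top_on L) L"
    unfolding openin_euclidean_top_on
  proof (intro conjI allI impI)
    fix B :: "'a set" assume "finite B \<and> independent B \<and> span B = L"
    then have "{c \<in> topspace (powertop_real B). (\<Sum>b\<in>B. c b *\<^sub>R b) \<in> L} = topspace (powertop_real B)"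
      by (auto intro: span_sum span_scale span_base)
    then show "openin (powertop_real B) {c \<in> topspace (powertop_real B). (\<Sum>b\<in>B. c b *\<^sub>R b) \<in> L}"
      by (metis openin_topspace)
  qed simp
  then show ?thesis
    by (metis openin_euclidean_top_on openin_subset openin_topspace subset_antisym)
qed

lemma topspace_finite_topology: "topspace (finite_topology S) = S"
proof -
  have "openin (euclidean_top_on L) L" for L :: "'a set"
    using openin_topspace[of "euclidean_top_on L"] by (simp add: topspace_euclidean_top_on)
  then have "openin (finite_topology S) S"
    by (auto simp: openin_finite_topology Int_absorb1)
  then show ?thesis
    by (metis openin_finite_topology openin_subset openin_topspace subset_antisym)
qed

lemma continuous_map_lincomb_euclidean_top_on:
  assumes "finite B" "independent B" "span B = L"
  shows "continuous_map (powertop_real B) (euclidean_top_on L) (\<lambda>c. \<Sum>b\<in>B. c b *\<^sub>R b)"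
  unfolding continuous_map topspace_euclidean_top_on
  using assms by (auto simp: openin_euclidean_top_on intro: span_sum span_scale span_base)

lemma continuous_map_euclidean_top_on_finite_topology:
  assumes "fin_dim_subspace L" "L \<subseteq> S"
  shows "continuous_map (euclidean_top_on L) (finite_topology S) (\<lambda>x. x)"
proof -
  have "{x \<in> L. x \<in> U} = U \<inter> L" for U by blast
  then show ?thesis
    unfolding continuous_map topspace_euclidean_top_on topspace_finite_topology
    using assms by (auto simp: openin_finite_topology)
qed

lemma continuous_map_from_finite_topology:
  assumes "f ` S \<subseteq> topspace Y"
    and "\<And>B. finite B \<Longrightarrow> independent B \<Longrightarrow> span B \<subseteq> S \<Longrightarrow>
           continuous_map (powertop_real B) Y (\<lambda>c. f (\<Sum>b\<in>B. c b *\<^sub>R b))"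
  shows "continuous_map (finite_topology S) Y f"
  unfolding continuous_map topspace_finite_topology
proof (intro conjI allI impI)
  show "f ` S \<subseteq> topspace Y" by fact
  fix V assume V: "openin Y V"
  show "openin (finite_topology S) {y \<in> S. f y \<in> V}"
    unfolding openin_finite_topology openin_euclidean_top_on
  proof (intro conjI allI impI)
    fix L B assume L: "fin_dim_subspace L \<and> L \<subseteq> S" and B: "finite B \<and> independent B \<and> span B = L"
    have "(\<Sum>b\<in>B. c b *\<^sub>R b) \<in> L" for c
      using B by (auto intro: span_sum span_scale span_base)
    then have eq: "{c \<in> topspace (powertop_real B). (\<Sum>b\<in>B. c b *\<^sub>R b) \<in> {y \<in> S. f y \<in> V} \<inter> L}
             = {c \<in> topspace (powertop_real B). f (\<Sum>b\<in>B. c b *\<^sub>R b) \<in> V}"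
      using L by blast
    have "openin (powertop_real B) {c \<in> topspace (powertop_real B). f (\<Sum>b\<in>B. c b *\<^sub>R b) \<in> V}"
      by (rule openin_continuous_map_preimage[OF assms(2) V]) (use B L in auto)
    then show "openin (powertop_real B) {c \<in> topspace (powertop_real B). (\<Sum>b\<in>B. c b *\<^sub>R b) \<in> {y \<in> S. f y \<in> V} \<inter> L}"
      by (simp only: eq)
  qed auto
qed

lemma linear_coordinate: "linear (\<lambda>y :: 'i \<Rightarrow> real. y \<alpha>)"
  by (auto intro!: linearI simp: scaleR_fun_def)

lemma continuous_map_finite_topology_linear:
  assumes "linear \<phi>"
  shows "continuous_map (finite_topology S) euclideanreal \<phi>"
proof (rule continuous_map_from_finite_topology)
  fix B :: "'a set" assume "finite B"
  have "continuous_map (powertop_real B) euclideanreal (\<lambda>c. \<Sum>b\<in>B. c b * \<phi> b)"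
    by (intro continuous_map_sum continuous_map_real_mult_right continuous_map_product_projection)
       (use \<open>finite B\<close> in auto)
  then show "continuous_map (powertop_real B) euclideanreal (\<lambda>c. \<phi> (\<Sum>b\<in>B. c b *\<^sub>R b))"
    using assms by (simp add: linear_sum linear_cmul)
qed auto

lemma continuous_map_finite_topology_lincomb:
  assumes "subspace S" "finite F" "F \<subseteq> S"
    and c: "\<And>\<alpha>. \<alpha> \<in> F \<Longrightarrow> continuous_map Y euclideanreal (c \<alpha>)"
  shows "continuous_map Y (finite_topology S) (\<lambda>x. \<Sum>\<alpha>\<in>F. c \<alpha> x *\<^sub>R \<alpha>)"
proof -
  \<comment> \<open>rewrite the combination in coordinates for a basis \<open>B \<subseteq> F\<close> of \<open>span F\<close>\<close>
  obtain B where B: "B \<subseteq> F" "independent B" "F \<subseteq> span B"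
    using maximal_independent_subset by blast
  have "finite B"
    using B(1) assms(2) finite_subset by blast
  have span_B: "span B = span F"
    using B by (metis span_eq span_superset subset_trans)
  have L: "fin_dim_subspace (span F)" "span F \<subseteq> S"
    using assms by (auto simp: fin_dim_subspace_def span_minimal)
  have "\<forall>\<alpha>\<in>F. \<exists>u. (\<Sum>b\<in>B. u b *\<^sub>R b) = \<alpha>"
    using B(3) unfolding span_finite[OF \<open>finite B\<close>] by blast
  then obtain k where k: "\<And>\<alpha>. \<alpha> \<in> F \<Longrightarrow> (\<Sum>b\<in>B. k \<alpha> b *\<^sub>R b) = \<alpha>"
    by metis
  define D where "D x = restrict (\<lambda>b. \<Sum>\<alpha>\<in>F. c \<alpha> x * k \<alpha> b) B" for x
  have "continuous_map Y (powertop_real B) D"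
    unfolding continuous_map_componentwise
  proof (intro conjI ballI)
    fix b assume "b \<in> B"
    then show "continuous_map Y euclideanreal (\<lambda>x. D x b)"
      unfolding D_def using assms(2) c by (auto intro!: continuous_map_sum continuous_map_real_mult_right)
  qed (auto simp: D_def)
  then have "continuous_map Y (euclidean_top_on (span F)) (\<lambda>x. \<Sum>b\<in>B. D x b *\<^sub>R b)"
    using continuous_map_compose continuous_map_lincomb_euclidean_top_on[OF \<open>finite B\<close> B(2) span_B]
    unfolding o_def by fast
  then have "continuous_map Y (finite_topology S) (\<lambda>x. \<Sum>b\<in>B. D x b *\<^sub>R b)"
    using continuous_map_compose continuous_map_euclidean_top_on_finite_topology[OF L]
    unfolding o_def by fast
  moreover have "(\<Sum>b\<in>B. D x b *\<^sub>R b) = (\<Sum>\<alpha>\<in>F. c \<alpha> x *\<^sub>R \<alpha>)" for x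
  proof -
    have "(\<Sum>b\<in>B. D x b *\<^sub>R b) = (\<Sum>b\<in>B. \<Sum>\<alpha>\<in>F. c \<alpha> x *\<^sub>R (k \<alpha> b *\<^sub>R b))"
      by (simp add: D_def scaleR_sum_left)
    also have "\<dots> = (\<Sum>\<alpha>\<in>F. c \<alpha> x *\<^sub>R (\<Sum>b\<in>B. k \<alpha> b *\<^sub>R b))"
      by (simp add: sum.swap[of _ B] scaleR_sum_right)
    also have "\<dots> = (\<Sum>\<alpha>\<in>F. c \<alpha> x *\<^sub>R \<alpha>)"
      using k by simp
    finally show ?thesis .
  qed
  ultimately show ?thesis
    by simp
qed

section \<open>Topological vector spaces and normed subspaces\<close>

lemma continuous_map_tvs_lincomb:
  assumes T: "is_tvs S T" and "finite F" "F \<subseteq> S"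
    and c: "\<And>\<alpha>. \<alpha> \<in> F \<Longrightarrow> continuous_map Y euclideanreal (c \<alpha>)"
  shows "continuous_map Y T (\<lambda>x. \<Sum>\<alpha>\<in>F. c \<alpha> x *\<^sub>R \<alpha>)"
  using assms(2-4)
proof (induction F rule: finite_induct)
  case empty
  then show ?case
    using T by (simp add: is_tvs_def subspace_0)
next
  case (insert a F)
  have add: "continuous_map (prod_topology T T) T (\<lambda>(u, v). u + v)"
    and scale: "continuous_map (prod_topology euclideanreal T) T (\<lambda>(r, v). r *\<^sub>R v)"
    and "a \<in> topspace T"
    using T insert.prems by (auto simp: is_tvs_def)
  then have "continuous_map Y T (\<lambda>x. c a x *\<^sub>R a)"
    using continuous_map_compose[OF continuous_map_pairedI[OF insert.prems(2)] scale, of a "\<lambda>_. a"]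
    by (simp add: o_def)
  then have "continuous_map Y T (\<lambda>x. c a x *\<^sub>R a + (\<Sum>\<alpha>\<in>F. c \<alpha> x *\<^sub>R \<alpha>))"
    using continuous_map_compose[OF continuous_map_pairedI add] insert by (simp add: o_def)
  then show ?case
    using insert by simp
qed

locale normed_subspace = Metric_space S "\<lambda>y z. N (y - z)"
  for S :: "'e::real_vector set" and N :: "'e \<Rightarrow> real" +
  assumes subspace_S: "subspace S"
    and norm_triangle: "\<And>x y. x \<in> S \<Longrightarrow> y \<in> S \<Longrightarrow> N (x + y) \<le> N x + N y"
    and norm_homogeneous: "\<And>r x. x \<in> S \<Longrightarrow> N (r *\<^sub>R x) = \<bar>r\<bar> * N x"
begin

lemma norm_0: "N 0 = 0"
  using zero[of 0 0] subspace_S by (simp add: subspace_0)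

lemma continuous_map_add: "continuous_map (prod_topology mtopology mtopology) mtopology (\<lambda>(u, v). u + v)"
  unfolding continuous_map_to_metric
proof (intro ballI allI impI)
  fix p and e :: real assume "p \<in> topspace (prod_topology mtopology mtopology)" and "0 < e"
  then obtain u v where p: "p = (u, v)" and uv: "u \<in> S" "v \<in> S"
    by auto
  show "\<exists>U. openin (prod_topology mtopology mtopology) U \<and> p \<in> U \<and>
          (\<forall>q\<in>U. (case q of (u, v) \<Rightarrow> u + v) \<in> mball (case p of (u, v) \<Rightarrow> u + v) e)"
    unfolding p
  proof (intro exI conjI ballI)
    show "openin (prod_topology mtopology mtopology) (mball u (e/2) \<times> mball v (e/2))"
      by (simp add: openin_prod_Times_iff)
    show "(u, v) \<in> mball u (e/2) \<times> mball v (e/2)"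
      using uv \<open>0 < e\<close> norm_0 by simp
    fix q assume "q \<in> mball u (e/2) \<times> mball v (e/2)"
    then obtain u' v' where q: "q = (u', v')" "u' \<in> S" "v' \<in> S" "N (u - u') < e/2" "N (v - v') < e/2"
      by auto
    have "N ((u + v) - (u' + v')) \<le> N (u - u') + N (v - v')"
      using norm_triangle[of "u - u'" "v - v'"] uv q subspace_S by (simp add: subspace_diff algebra_simps)
    then show "(case q of (u, v) \<Rightarrow> u + v) \<in> mball (case (u, v) of (u, v) \<Rightarrow> u + v) e"
      using uv q subspace_S by (simp add: subspace_add)
  qed
qed

lemma norm_scaleR_diff_le:
  assumes "v \<in> S" "v' \<in> S"
  shows "N (a *\<^sub>R v - a' *\<^sub>R v') \<le> \<bar>a - a'\<bar> * N v + \<bar>a'\<bar> * N (v - v')"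
proof -
  have "a *\<^sub>R v - a' *\<^sub>R v' = (a - a') *\<^sub>R v + a' *\<^sub>R (v - v')"
    by (simp add: algebra_simps)
  moreover have "v - v' \<in> S"
    using assms subspace_S by (simp add: subspace_diff)
  ultimately show ?thesis
    using norm_triangle[of "(a - a') *\<^sub>R v" "a' *\<^sub>R (v - v')"] norm_homogeneous assms subspace_S
    by (simp add: subspace_scale)
qed

lemma continuous_map_scaleR:
  "continuous_map (prod_topology euclideanreal mtopology) mtopology (\<lambda>(r, v). r *\<^sub>R v)"
  unfolding continuous_map_to_metric
proof (intro ballI allI impI)
  fix p and e :: real assume "p \<in> topspace (prod_topology euclideanreal mtopology)" and "0 < e"
  then obtain a v where p: "p = (a, v)" and v: "v \<in> S"
    by auto
  have "0 \<le> N v"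
    using nonneg[of v 0] by simp
  define \<delta> where "\<delta> = min 1 (e / (N v + \<bar>a\<bar> + 1))"
  have K: "0 < N v + \<bar>a\<bar> + 1"
    using \<open>0 \<le> N v\<close> by simp
  then have "0 < \<delta>" "\<delta> \<le> 1"
    using \<open>0 < e\<close> by (auto simp: \<delta>_def)
  have "\<delta> * (N v + \<bar>a\<bar> + 1) \<le> e / (N v + \<bar>a\<bar> + 1) * (N v + \<bar>a\<bar> + 1)"
    using K by (intro mult_right_mono) (auto simp: \<delta>_def)
  then have "\<delta> * (N v + \<bar>a\<bar> + 1) \<le> e"
    using K by simp
  show "\<exists>U. openin (prod_topology euclideanreal mtopology) U \<and> p \<in> U \<and>
          (\<forall>q\<in>U. (case q of (a, v) \<Rightarrow> a *\<^sub>R v) \<in> mball (case p of (a, v) \<Rightarrow> a *\<^sub>R v) e)"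
    unfolding p
  proof (intro exI conjI ballI)
    show "openin (prod_topology euclideanreal mtopology) (ball a \<delta> \<times> mball v \<delta>)"
      by (simp add: openin_prod_Times_iff)
    show "(a, v) \<in> ball a \<delta> \<times> mball v \<delta>"
      using v \<open>0 < \<delta>\<close> norm_0 by simp
    fix q assume "q \<in> ball a \<delta> \<times> mball v \<delta>"
    then obtain a' v' where q: "q = (a', v')" "v' \<in> S" "\<bar>a - a'\<bar> < \<delta>" "N (v - v') < \<delta>"
      by (auto simp: dist_real_def)
    have "\<bar>a - a'\<bar> * N v \<le> \<delta> * N v"
      using q \<open>0 \<le> N v\<close> by (intro mult_right_mono) auto
    moreover have "\<bar>a'\<bar> * N (v - v') \<le> (\<bar>a\<bar> + 1) * N (v - v')"
      using q \<open>\<delta> \<le> 1\<close> nonneg[of v v'] by (intro mult_right_mono) auto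
    moreover have "(\<bar>a\<bar> + 1) * N (v - v') < (\<bar>a\<bar> + 1) * \<delta>"
      using q by (intro mult_strict_left_mono) auto
    ultimately have "N (a *\<^sub>R v - a' *\<^sub>R v') < e"
      using norm_scaleR_diff_le[OF v q(2), of a a'] \<open>\<delta> * (N v + \<bar>a\<bar> + 1) \<le> e\<close>
      by (simp add: algebra_simps)
    then show "(case q of (a, v) \<Rightarrow> a *\<^sub>R v) \<in> mball (case (a, v) of (a, v) \<Rightarrow> a *\<^sub>R v) e"
      using v q subspace_S by (simp add: subspace_scale)
  qed
qed

lemma is_tvs: "is_tvs S mtopology"
  unfolding is_tvs_def using subspace_S continuous_map_add continuous_map_scaleR by simp

end

section \<open>The space c00 with the l1 norm\<close>

lemma subspace_c00: "subspace (c00 A)"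
  unfolding subspace_def
proof (intro conjI ballI allI)
  fix x y assume "x \<in> c00 A" "y \<in> c00 A"
  moreover have "{\<alpha>. (x + y) \<alpha> \<noteq> 0} \<subseteq> {\<alpha>. x \<alpha> \<noteq> 0} \<union> {\<alpha>. y \<alpha> \<noteq> 0}"
    by auto
  ultimately show "x + y \<in> c00 A"
    unfolding c00_def by (auto intro: finite_subset)
next
  fix r :: real and x assume "x \<in> c00 A"
  moreover have "{\<alpha>. (r *\<^sub>R x) \<alpha> \<noteq> 0} \<subseteq> {\<alpha>. x \<alpha> \<noteq> 0}"
    by (auto simp: scaleR_fun_def)
  ultimately show "r *\<^sub>R x \<in> c00 A"
    unfolding c00_def by (auto intro: finite_subset)
qed (simp add: c00_def)

lemma l1norm_eq_sum:
  assumes "finite F" "{\<alpha>. y \<alpha> \<noteq> 0} \<subseteq> F"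
  shows "l1norm y = (\<Sum>\<alpha>\<in>F. \<bar>y \<alpha>\<bar>)"
  unfolding l1norm_def by (rule sum.mono_neutral_left) (use assms in auto)

lemma l1norm_nonneg: "0 \<le> l1norm y"
  unfolding l1norm_def by (simp add: sum_nonneg)

lemma l1norm_scaleR: "l1norm (r *\<^sub>R y) = \<bar>r\<bar> * l1norm y"
proof (cases "r = 0")
  case False
  then have "{\<alpha>. (r *\<^sub>R y) \<alpha> \<noteq> 0} = {\<alpha>. y \<alpha> \<noteq> 0}"
    by (auto simp: scaleR_fun_def)
  then show ?thesis
    unfolding l1norm_def by (simp add: scaleR_fun_def abs_mult sum_distrib_left)
qed (simp add: l1norm_def scaleR_fun_def)

lemma l1norm_triangle:
  assumes "x \<in> c00 A" "y \<in> c00 A"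
  shows "l1norm (x + y) \<le> l1norm x + l1norm y"
proof -
  let ?F = "{\<alpha>. x \<alpha> \<noteq> 0} \<union> {\<alpha>. y \<alpha> \<noteq> 0}"
  have "finite ?F"
    using assms by (simp add: c00_def)
  then have "l1norm (x + y) = (\<Sum>\<alpha>\<in>?F. \<bar>(x + y) \<alpha>\<bar>)"
    and "l1norm x = (\<Sum>\<alpha>\<in>?F. \<bar>x \<alpha>\<bar>)" "l1norm y = (\<Sum>\<alpha>\<in>?F. \<bar>y \<alpha>\<bar>)"
    by (rule l1norm_eq_sum; auto)+
  then show ?thesis
    by (simp add: sum_mono abs_triangle_ineq flip: sum.distrib)
qed

lemma abs_le_l1norm:
  assumes "y \<in> c00 A"
  shows "\<bar>y \<alpha>\<bar> \<le> l1norm y"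
proof (cases "y \<alpha> = 0")
  case False
  then show ?thesis
    using assms unfolding l1norm_def c00_def
    by (intro member_le_sum[where f="\<lambda>\<alpha>. \<bar>y \<alpha>\<bar>", simplified]) auto
qed (simp add: l1norm_nonneg)

lemma Metric_space_c00: "Metric_space (c00 A) (\<lambda>y z. l1norm (y - z))"
proof
  fix x y z :: "'a \<Rightarrow> real"
  show "0 \<le> l1norm (x - y)"
    by (rule l1norm_nonneg)
  show "l1norm (x - y) = l1norm (y - x)"
    using l1norm_scaleR[of "-1" "y - x"] by simp
  assume "x \<in> c00 A" "y \<in> c00 A" "z \<in> c00 A"
  then have "x - y \<in> c00 A" "y - z \<in> c00 A"
    by (simp_all add: subspace_c00 subspace_diff)
  then show "l1norm (x - z) \<le> l1norm (x - y) + l1norm (y - z)"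
    using l1norm_triangle[of "x - y" A "y - z"] by simp
  show "l1norm (x - y) = 0 \<longleftrightarrow> x = y"
    using abs_le_l1norm[OF \<open>x - y \<in> c00 A\<close>] l1norm_nonneg[of "x - y"]
    by (auto simp: l1norm_def fun_eq_iff)
qed

lemma normed_subspace_c00: "normed_subspace (c00 A) l1norm"
  by (intro normed_subspace.intro normed_subspace_axioms.intro Metric_space_c00 subspace_c00
      l1norm_triangle l1norm_scaleR)

lemma is_tvs_c00: "is_tvs (c00 A) (c00_topology A)"
  unfolding c00_topology_def by (rule normed_subspace.is_tvs[OF normed_subspace_c00])

lemma continuous_map_c00_coordinate: "continuous_map (c00_topology A) euclideanreal (\<lambda>y. y \<alpha>)"
proof -
  interpret M: Metric_space "c00 A" "\<lambda>y z. l1norm (y - z)"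
    by (rule Metric_space_c00)
  have "\<bar>y \<alpha> - z \<alpha>\<bar> \<le> l1norm (y - z)" if "y \<in> c00 A" "z \<in> c00 A" for y z
    using abs_le_l1norm[of "y - z" A \<alpha>] that by (simp add: subspace_c00 subspace_diff)
  then have "continuous_map M.mtopology euclideanreal (\<lambda>y. y \<alpha>)"
    unfolding M.continuous_map_from_metric
    by (fastforce simp: dist_real_def dest!: open_contains_ball_eq[THEN iffD1, rule_format])
  then show ?thesis
    unfolding c00_topology_def .
qed

section \<open>Locally finite linear combinations\<close>

lemma continuous_map_from_open_neighbourhoods:
  assumes "\<And>x. x \<in> topspace X \<Longrightarrow> \<exists>W. openin X W \<and> x \<in> W \<and> continuous_map (subtopology X W) Y f"
  shows "continuous_map X Y f"
  by (rule pasting_lemma[where I="{W. openin X W \<and> continuous_map (subtopology X W) Y f}"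
        and T="\<lambda>W. W" and f="\<lambda>_. f"]) (use assms in auto)

definition locally_finite_lincomb :: "'a topology \<Rightarrow> 'e::real_vector set \<Rightarrow> ('a \<Rightarrow> 'e) \<Rightarrow> bool" where
  "locally_finite_lincomb X S f \<longleftrightarrow>
     (\<forall>x\<in>topspace X. \<exists>W F c. openin X W \<and> x \<in> W \<and> finite F \<and> F \<subseteq> S \<and>
        (\<forall>\<alpha>\<in>F. continuous_map (subtopology X W) euclideanreal (c \<alpha>)) \<and>
        (\<forall>y\<in>W. f y = (\<Sum>\<alpha>\<in>F. c \<alpha> y *\<^sub>R \<alpha>)))"

lemma continuous_map_locally_finite_lincomb:
  assumes f: "locally_finite_lincomb X S f"
    and lincomb: "\<And>W F c. finite F \<Longrightarrow> F \<subseteq> S \<Longrightarrow>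
           (\<And>\<alpha>. \<alpha> \<in> F \<Longrightarrow> continuous_map (subtopology X W) euclideanreal (c \<alpha>)) \<Longrightarrow>
           continuous_map (subtopology X W) T (\<lambda>x. \<Sum>\<alpha>\<in>F. c \<alpha> x *\<^sub>R \<alpha>)"
  shows "continuous_map X T f"
proof (rule continuous_map_from_open_neighbourhoods)
  fix x assume "x \<in> topspace X"
  with f have "\<exists>W F c. openin X W \<and> x \<in> W \<and> finite F \<and> F \<subseteq> S \<and>
        (\<forall>\<alpha>\<in>F. continuous_map (subtopology X W) euclideanreal (c \<alpha>)) \<and>
        (\<forall>y\<in>W. f y = (\<Sum>\<alpha>\<in>F. c \<alpha> y *\<^sub>R \<alpha>))"
    unfolding locally_finite_lincomb_def by blast
  then obtain W F c where W: "openin X W" "x \<in> W" "finite F" "F \<subseteq> S"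
    "\<forall>\<alpha>\<in>F. continuous_map (subtopology X W) euclideanreal (c \<alpha>)"
    "\<forall>y\<in>W. f y = (\<Sum>\<alpha>\<in>F. c \<alpha> y *\<^sub>R \<alpha>)"
    by (elim exE conjE) (rule that)
  have "continuous_map (subtopology X W) T (\<lambda>x. \<Sum>\<alpha>\<in>F. c \<alpha> x *\<^sub>R \<alpha>)"
    using W(5) by (intro lincomb[OF W(3,4)]) blast
  then have "continuous_map (subtopology X W) T f"
    by (rule continuous_map_eq) (use W(6) in auto)
  then show "\<exists>W. openin X W \<and> x \<in> W \<and> continuous_map (subtopology X W) T f"
    using W(1,2) by blast
qed

section \<open>Partitions of unity\<close>

lemma continuous_map_Max:
  assumes "finite F" "F \<noteq> {}" "\<And>\<alpha>. \<alpha> \<in> F \<Longrightarrow> continuous_map X euclideanreal (f \<alpha>)"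
  shows "continuous_map X euclideanreal (\<lambda>x. Max ((\<lambda>\<alpha>. f \<alpha> x) ` F))"
  using assms
proof (induction F rule: finite_ne_induct)
  case (insert \<alpha> F)
  then show ?case
    by (simp add: continuous_map_real_max)
qed simp

lemma partition_of_unity_exists_pos:
  assumes "partition_of_unity X A \<xi>" "x \<in> topspace X"
  obtains \<alpha> where "\<alpha> \<in> A" "0 < \<xi> \<alpha> x"
proof -
  have sums: "((\<lambda>\<alpha>. \<xi> \<alpha> x) has_sum 1) A"
    and nonneg: "\<And>\<alpha>. \<alpha> \<in> A \<Longrightarrow> 0 \<le> \<xi> \<alpha> x"
    using assms unfolding partition_of_unity_def by auto
  have "\<exists>\<alpha>\<in>A. \<xi> \<alpha> x \<noteq> 0"
  proof (rule ccontr)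
    assume "\<not> (\<exists>\<alpha>\<in>A. \<xi> \<alpha> x \<noteq> 0)"
    then have "((\<lambda>\<alpha>. \<xi> \<alpha> x) has_sum 0) A"
      by (intro has_sum_0) auto
    with sums show False
      using has_sum_unique by force
  qed
  then show ?thesis
    using nonneg that by (metis less_le)
qed

lemma partition_of_unity_sum_le_1:
  assumes "partition_of_unity X A \<xi>" "x \<in> topspace X" "F \<subseteq> A"
  shows "(\<Sum>\<alpha>\<in>F. \<xi> \<alpha> x) \<le> 1"
proof (cases "finite F")
  case True
  have "((\<lambda>\<alpha>. \<xi> \<alpha> x) has_sum 1) A"
    and "\<And>\<alpha>. \<alpha> \<in> A \<Longrightarrow> 0 \<le> \<xi> \<alpha> x"
    using assms unfolding partition_of_unity_def by auto
  then show ?thesis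
    using has_sum_mono'[OF has_sum_finite[OF True]] \<open>F \<subseteq> A\<close> by blast
qed simp

lemma partition_of_unity_locally_dominated:
  assumes pu: "partition_of_unity X A \<xi>" and "x0 \<in> topspace X"
  obtains W F \<alpha>0 where "openin X W" "x0 \<in> W" "finite F" "F \<subseteq> A" "\<alpha>0 \<in> F"
    "\<And>x \<beta>. x \<in> W \<Longrightarrow> \<beta> \<in> A - F \<Longrightarrow> 2 * \<xi> \<beta> x < \<xi> \<alpha>0 x"
proof -
  have cont: "\<And>\<alpha>. \<alpha> \<in> A \<Longrightarrow> continuous_map X euclideanreal (\<xi> \<alpha>)"
    and nonneg: "\<And>\<alpha> x. \<alpha> \<in> A \<Longrightarrow> x \<in> topspace X \<Longrightarrow> 0 \<le> \<xi> \<alpha> x"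
    and sums: "((\<lambda>\<alpha>. \<xi> \<alpha> x0) has_sum 1) A"
    using pu \<open>x0 \<in> topspace X\<close> unfolding partition_of_unity_def by auto
  obtain \<alpha>0 where \<alpha>0: "\<alpha>0 \<in> A" "0 < \<xi> \<alpha>0 x0"
    using partition_of_unity_exists_pos[OF pu \<open>x0 \<in> topspace X\<close>] .
  define a where "a = \<xi> \<alpha>0 x0"
  have "\<forall>\<^sub>F F in finite_subsets_at_top A. 1 - a/4 < (\<Sum>\<alpha>\<in>F. \<xi> \<alpha> x0)"
    using sums \<alpha>0 unfolding has_sum_def a_def by (intro order_tendstoD(1)) auto
  then obtain F0 where F0: "finite F0" "F0 \<subseteq> A" "1 - a/4 < (\<Sum>\<alpha>\<in>F0. \<xi> \<alpha> x0)"
    unfolding eventually_finite_subsets_at_top by blast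
  define F where "F = insert \<alpha>0 F0"
  have F: "finite F" "F \<subseteq> A" "\<alpha>0 \<in> F"
    using F0 \<alpha>0 by (auto simp: F_def)
  have "(\<Sum>\<alpha>\<in>F0. \<xi> \<alpha> x0) \<le> (\<Sum>\<alpha>\<in>F. \<xi> \<alpha> x0)"
    using F F0 nonneg \<open>x0 \<in> topspace X\<close> by (intro sum_mono2) (auto simp: F_def)
  \<comment> \<open>near \<open>x0\<close> the finite set \<open>F\<close> carries mass \<open>> 1 - a/4\<close>, so every other \<open>\<xi> \<beta>\<close> is \<open>< a/4\<close>\<close>
  define W where "W = {x \<in> topspace X. (\<Sum>\<alpha>\<in>F. \<xi> \<alpha> x) \<in> {1 - a/4<..}} \<inter> {x \<in> topspace X. \<xi> \<alpha>0 x \<in> {a/2<..}}"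
  show ?thesis
  proof
    show "openin X W"
      unfolding W_def using F cont
      by (intro openin_Int openin_continuous_map_preimage[where Y=euclideanreal] continuous_map_sum) auto
    show "x0 \<in> W"
      using \<open>x0 \<in> topspace X\<close> F0(3) \<alpha>0(2) \<open>(\<Sum>\<alpha>\<in>F0. \<xi> \<alpha> x0) \<le> _\<close> by (simp add: W_def a_def)
    fix x \<beta> assume x: "x \<in> W" and \<beta>: "\<beta> \<in> A - F"
    have "\<xi> \<beta> x + (\<Sum>\<alpha>\<in>F. \<xi> \<alpha> x) \<le> 1"
      using partition_of_unity_sum_le_1[OF pu _, of x "insert \<beta> F"] x \<beta> F by (simp add: W_def)
    then show "2 * \<xi> \<beta> x < \<xi> \<alpha>0 x"
      using x by (simp add: W_def)
  qed (use F in auto)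
qed

lemma partition_of_unity_le_Sup:
  assumes "partition_of_unity X A \<xi>" "x \<in> topspace X" "\<alpha> \<in> A"
  shows "\<xi> \<alpha> x \<le> Sup ((\<lambda>\<alpha>. \<xi> \<alpha> x) ` A)"
proof -
  have "bdd_above ((\<lambda>\<alpha>. \<xi> \<alpha> x) ` A)"
    using assms unfolding partition_of_unity_def by (intro bdd_aboveI2[where M=1]) auto
  then show ?thesis
    using assms(3) by (simp add: cSup_upper)
qed

lemma partition_of_unity_Sup_locally_Max:
  assumes pu: "partition_of_unity X A \<xi>" and "x0 \<in> topspace X"
  obtains W F where "openin X W" "x0 \<in> W" "finite F" "F \<subseteq> A" "F \<noteq> {}"
    "\<And>x. x \<in> W \<Longrightarrow> Sup ((\<lambda>\<alpha>. \<xi> \<alpha> x) ` A) = Max ((\<lambda>\<alpha>. \<xi> \<alpha> x) ` F)"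
    "\<And>x \<beta>. x \<in> W \<Longrightarrow> \<beta> \<in> A - F \<Longrightarrow> 2 * \<xi> \<beta> x < Sup ((\<lambda>\<alpha>. \<xi> \<alpha> x) ` A)"
proof -
  obtain W F \<alpha>0 where W: "openin X W" "x0 \<in> W" "finite F" "F \<subseteq> A" "\<alpha>0 \<in> F"
    and dominated: "\<And>x \<beta>. x \<in> W \<Longrightarrow> \<beta> \<in> A - F \<Longrightarrow> 2 * \<xi> \<beta> x < \<xi> \<alpha>0 x"
    using partition_of_unity_locally_dominated[OF assms] by blast
  have Max_eq: "Sup ((\<lambda>\<alpha>. \<xi> \<alpha> x) ` A) = Max ((\<lambda>\<alpha>. \<xi> \<alpha> x) ` F)" if "x \<in> W" for x
  proof (rule cSup_eq_maximum)
    show "Max ((\<lambda>\<alpha>. \<xi> \<alpha> x) ` F) \<in> (\<lambda>\<alpha>. \<xi> \<alpha> x) ` A"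
      using W Max_in[of "(\<lambda>\<alpha>. \<xi> \<alpha> x) ` F"] by blast
    have "\<xi> \<beta> x \<le> Max ((\<lambda>\<alpha>. \<xi> \<alpha> x) ` F)" if "\<beta> \<in> A" for \<beta>
    proof (cases "\<beta> \<in> F")
      case False
      have "0 \<le> \<xi> \<beta> x"
        using pu \<open>\<beta> \<in> A\<close> openin_subset[OF W(1)] \<open>x \<in> W\<close> unfolding partition_of_unity_def by blast
      moreover have "\<xi> \<alpha>0 x \<le> Max ((\<lambda>\<alpha>. \<xi> \<alpha> x) ` F)"
        using W by simp
      moreover have "2 * \<xi> \<beta> x < \<xi> \<alpha>0 x"
        using dominated \<open>x \<in> W\<close> \<open>\<beta> \<in> A\<close> False by blast
      ultimately show ?thesis
        by linarith
    qed (use W in simp)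
    then show "\<And>s. s \<in> (\<lambda>\<alpha>. \<xi> \<alpha> x) ` A \<Longrightarrow> s \<le> Max ((\<lambda>\<alpha>. \<xi> \<alpha> x) ` F)"
      by blast
  qed
  show ?thesis
  proof
    fix x \<beta> assume "x \<in> W" "\<beta> \<in> A - F"
    moreover have "\<xi> \<alpha>0 x \<le> Sup ((\<lambda>\<alpha>. \<xi> \<alpha> x) ` A)"
      using partition_of_unity_le_Sup[OF pu] openin_subset[OF W(1)] \<open>x \<in> W\<close> W(4,5) by blast
    ultimately show "2 * \<xi> \<beta> x < Sup ((\<lambda>\<alpha>. \<xi> \<alpha> x) ` A)"
      using dominated by fastforce
  qed (use W Max_eq in auto)
qed

lemma continuous_map_partition_of_unity:
  assumes "partition_of_unity X A \<xi>" "\<alpha> \<in> A"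
  shows "continuous_map X euclideanreal (\<xi> \<alpha>)"
  using assms unfolding partition_of_unity_def by blast

lemma continuous_map_partition_of_unity_Sup:
  assumes pu: "partition_of_unity X A \<xi>"
  shows "continuous_map X euclideanreal (\<lambda>x. Sup ((\<lambda>\<alpha>. \<xi> \<alpha> x) ` A))"
proof (rule continuous_map_from_open_neighbourhoods)
  fix x0 assume "x0 \<in> topspace X"
  then obtain W F where W: "openin X W" "x0 \<in> W" "finite F" "F \<subseteq> A" "F \<noteq> {}"
    and Max_eq: "\<And>x. x \<in> W \<Longrightarrow> Sup ((\<lambda>\<alpha>. \<xi> \<alpha> x) ` A) = Max ((\<lambda>\<alpha>. \<xi> \<alpha> x) ` F)"
    and "\<And>x \<beta>. x \<in> W \<Longrightarrow> \<beta> \<in> A - F \<Longrightarrow> 2 * \<xi> \<beta> x < Sup ((\<lambda>\<alpha>. \<xi> \<alpha> x) ` A)"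
    using partition_of_unity_Sup_locally_Max[OF pu] by blast
  have "continuous_map (subtopology X W) euclideanreal (\<lambda>x. Max ((\<lambda>\<alpha>. \<xi> \<alpha> x) ` F))"
    using W(3-5) continuous_map_partition_of_unity[OF pu]
    by (intro continuous_map_Max continuous_map_from_subtopology) auto
  then have "continuous_map (subtopology X W) euclideanreal (\<lambda>x. Sup ((\<lambda>\<alpha>. \<xi> \<alpha> x) ` A))"
    by (rule continuous_map_eq) (simp add: Max_eq)
  with W show "\<exists>W. openin X W \<and> x0 \<in> W \<and>
      continuous_map (subtopology X W) euclideanreal (\<lambda>x. Sup ((\<lambda>\<alpha>. \<xi> \<alpha> x) ` A))"
    by blast
qed

lemma partition_of_unity_exists_gt_half_Sup:
  assumes pu: "partition_of_unity X A \<xi>" and x: "x \<in> topspace X"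
  obtains \<alpha> where "\<alpha> \<in> A" "Sup ((\<lambda>\<alpha>. \<xi> \<alpha> x) ` A) / 2 < \<xi> \<alpha> x"
proof -
  obtain \<alpha>0 where "\<alpha>0 \<in> A" "0 < \<xi> \<alpha>0 x"
    using partition_of_unity_exists_pos[OF pu x] .
  moreover have "\<xi> \<alpha>0 x \<le> Sup ((\<lambda>\<alpha>. \<xi> \<alpha> x) ` A)"
    using partition_of_unity_le_Sup[OF pu x \<open>\<alpha>0 \<in> A\<close>] .
  ultimately have "Sup ((\<lambda>\<alpha>. \<xi> \<alpha> x) ` A) / 2 < Sup ((\<lambda>\<alpha>. \<xi> \<alpha> x) ` A)"
    by linarith
  then show ?thesis
    using less_cSupD[of "(\<lambda>\<alpha>. \<xi> \<alpha> x) ` A"] \<open>\<alpha>0 \<in> A\<close> that by blast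
qed

definition locally_finite_family :: "'a topology \<Rightarrow> 'i set \<Rightarrow> ('i \<Rightarrow> 'a \<Rightarrow> real) \<Rightarrow> bool" where
  "locally_finite_family X A h \<longleftrightarrow>
     (\<forall>x\<in>topspace X. \<exists>W. openin X W \<and> x \<in> W \<and> finite {\<alpha> \<in> A. \<exists>y\<in>W. h \<alpha> y \<noteq> 0})"

lemma locally_finite_family_finite_support:
  assumes "locally_finite_family X A h" "x \<in> topspace X"
  shows "finite {\<alpha> \<in> A. h \<alpha> x \<noteq> 0}"
proof -
  obtain W where "x \<in> W" and W: "finite {\<alpha> \<in> A. \<exists>y\<in>W. h \<alpha> y \<noteq> 0}"
    using assms unfolding locally_finite_family_def by blast
  then have "{\<alpha> \<in> A. h \<alpha> x \<noteq> 0} \<subseteq> {\<alpha> \<in> A. \<exists>y\<in>W. h \<alpha> y \<noteq> 0}"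
    by blast
  then show ?thesis
    using W by (rule finite_subset)
qed

lemma partition_of_unity_locally_finite_shrink:
  assumes pu: "partition_of_unity X A \<xi>"
  obtains h where "\<And>\<alpha>. \<alpha> \<in> A \<Longrightarrow> continuous_map X euclideanreal (h \<alpha>)"
    "\<And>\<alpha> x. 0 \<le> h \<alpha> x" "locally_finite_family X A h"
    "\<And>x. x \<in> topspace X \<Longrightarrow> \<exists>\<alpha>\<in>A. 0 < h \<alpha> x"
    "\<And>\<alpha> x. \<alpha> \<in> A \<Longrightarrow> x \<in> topspace X \<Longrightarrow> h \<alpha> x \<noteq> 0 \<Longrightarrow> \<xi> \<alpha> x \<noteq> 0"
proof
  define g where "g x = Sup ((\<lambda>\<alpha>. \<xi> \<alpha> x) ` A)" for x
  show "continuous_map X euclideanreal (\<lambda>x. max 0 (\<xi> \<alpha> x - g x / 2))" if "\<alpha> \<in> A" for \<alpha>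
    using continuous_map_partition_of_unity[OF pu that] continuous_map_partition_of_unity_Sup[OF pu]
    unfolding g_def by (intro continuous_map_real_max continuous_map_diff continuous_map_real_divide) auto
  show "0 \<le> max 0 (\<xi> \<alpha> x - g x / 2)" for \<alpha> x
    by simp
  show "locally_finite_family X A (\<lambda>\<alpha> x. max 0 (\<xi> \<alpha> x - g x / 2))"
    unfolding locally_finite_family_def
  proof
    fix x0 assume "x0 \<in> topspace X"
    then obtain W F where W: "openin X W" "x0 \<in> W" "finite F" "F \<subseteq> A" "F \<noteq> {}"
      and "\<And>x. x \<in> W \<Longrightarrow> Sup ((\<lambda>\<alpha>. \<xi> \<alpha> x) ` A) = Max ((\<lambda>\<alpha>. \<xi> \<alpha> x) ` F)"
      and small: "\<And>x \<beta>. x \<in> W \<Longrightarrow> \<beta> \<in> A - F \<Longrightarrow> 2 * \<xi> \<beta> x < Sup ((\<lambda>\<alpha>. \<xi> \<alpha> x) ` A)"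
      using partition_of_unity_Sup_locally_Max[OF pu] by blast
    have "max 0 (\<xi> \<beta> y - g y / 2) = 0" if "y \<in> W" "\<beta> \<in> A - F" for y \<beta>
      using small[OF that] by (simp add: g_def)
    then have "{\<alpha> \<in> A. \<exists>y\<in>W. max 0 (\<xi> \<alpha> y - g y / 2) \<noteq> 0} \<subseteq> F"
      by blast
    with W show "\<exists>W. openin X W \<and> x0 \<in> W \<and> finite {\<alpha> \<in> A. \<exists>y\<in>W. max 0 (\<xi> \<alpha> y - g y / 2) \<noteq> 0}"
      by (meson finite_subset)
  qed
  show "\<exists>\<alpha>\<in>A. 0 < max 0 (\<xi> \<alpha> x - g x / 2)" if x: "x \<in> topspace X" for x
  proof -
    obtain \<alpha> where "\<alpha> \<in> A" "g x / 2 < \<xi> \<alpha> x"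
      using partition_of_unity_exists_gt_half_Sup[OF pu x] unfolding g_def by blast
    then show ?thesis
      by (intro bexI[of _ \<alpha>]) simp_all
  qed
  show "\<xi> \<alpha> x \<noteq> 0" if "\<alpha> \<in> A" "x \<in> topspace X" "max 0 (\<xi> \<alpha> x - g x / 2) \<noteq> 0" for \<alpha> x
  proof -
    have "g x / 2 < \<xi> \<alpha> x"
      using that(3) by (simp add: max_def split: if_splits)
    moreover have "\<xi> \<alpha> x \<le> g x"
      unfolding g_def by (rule partition_of_unity_le_Sup[OF pu that(2,1)])
    ultimately show ?thesis
      by auto
  qed
qed

section \<open>Selections from partitions of unity\<close>

definition weighted_average :: "('e::real_vector \<Rightarrow> 'a \<Rightarrow> real) \<Rightarrow> 'e set \<Rightarrow> 'a \<Rightarrow> 'e" where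
  "weighted_average h A x =
     (\<Sum>\<alpha>\<in>{\<alpha> \<in> A. h \<alpha> x \<noteq> 0}. (h \<alpha> x / (\<Sum>\<beta>\<in>{\<beta> \<in> A. h \<beta> x \<noteq> 0}. h \<beta> x)) *\<^sub>R \<alpha>)"

lemma weighted_average_in_convex:
  assumes "finite {\<alpha> \<in> A. h \<alpha> x \<noteq> 0}" "\<alpha>0 \<in> A" "0 < h \<alpha>0 x" "\<And>\<alpha>. 0 \<le> h \<alpha> x"
    and "convex C" "\<And>\<alpha>. \<alpha> \<in> A \<Longrightarrow> h \<alpha> x \<noteq> 0 \<Longrightarrow> \<alpha> \<in> C"
  shows "weighted_average h A x \<in> C"
proof -
  have "0 < (\<Sum>\<beta>\<in>{\<beta> \<in> A. h \<beta> x \<noteq> 0}. h \<beta> x)"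
    using assms(1-4) by (intro sum_pos2[of _ \<alpha>0]) auto
  then have "(\<Sum>\<alpha>\<in>{\<alpha> \<in> A. h \<alpha> x \<noteq> 0}. h \<alpha> x / (\<Sum>\<beta>\<in>{\<beta> \<in> A. h \<beta> x \<noteq> 0}. h \<beta> x)) = 1"
    by (simp flip: sum_divide_distrib)
  then show ?thesis
    unfolding weighted_average_def using assms \<open>0 < (\<Sum>\<beta>\<in>_. h \<beta> x)\<close>
    by (intro convex_sum) auto
qed

lemma locally_finite_lincomb_weighted_average:
  assumes cont: "\<And>\<alpha>. \<alpha> \<in> A \<Longrightarrow> continuous_map X euclideanreal (h \<alpha>)"
    and nonneg: "\<And>\<alpha> x. 0 \<le> h \<alpha> x" and "locally_finite_family X A h"
    and pos: "\<And>x. x \<in> topspace X \<Longrightarrow> \<exists>\<alpha>\<in>A. 0 < h \<alpha> x"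
  shows "locally_finite_lincomb X A (weighted_average h A)"
  unfolding locally_finite_lincomb_def
proof
  fix x0 assume "x0 \<in> topspace X"
  then obtain W where W: "openin X W" "x0 \<in> W" and "finite {\<alpha> \<in> A. \<exists>y\<in>W. h \<alpha> y \<noteq> 0}"
    using \<open>locally_finite_family X A h\<close> unfolding locally_finite_family_def by blast
  define F where "F = {\<alpha> \<in> A. \<exists>y\<in>W. h \<alpha> y \<noteq> 0}"
  define c where "c \<alpha> x = h \<alpha> x / (\<Sum>\<beta>\<in>F. h \<beta> x)" for \<alpha> x
  have F: "finite F" "F \<subseteq> A" "\<And>x. x \<in> W \<Longrightarrow> {\<alpha> \<in> A. h \<alpha> x \<noteq> 0} \<subseteq> F"
    using \<open>finite {\<alpha> \<in> A. _}\<close> by (auto simp: F_def)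
  have sum_pos: "0 < (\<Sum>\<beta>\<in>F. h \<beta> x)" if "x \<in> W" for x
  proof -
    obtain \<alpha> where "\<alpha> \<in> A" "0 < h \<alpha> x"
      using pos openin_subset[OF W(1)] \<open>x \<in> W\<close> by blast
    moreover from this have "\<alpha> \<in> F"
      using F(3)[OF \<open>x \<in> W\<close>] by auto
    ultimately show ?thesis
      using F(1) nonneg by (intro sum_pos2[of F \<alpha>]) auto
  qed
  have cont_W: "continuous_map (subtopology X W) euclideanreal (h \<alpha>)" if "\<alpha> \<in> F" for \<alpha>
    using F(2) cont that by (blast intro: continuous_map_from_subtopology)
  have "continuous_map (subtopology X W) euclideanreal (c \<alpha>)" if "\<alpha> \<in> F" for \<alpha>
    unfolding c_def
  proof (rule continuous_map_real_divide)
    show "(\<Sum>\<beta>\<in>F. h \<beta> x) \<noteq> 0" if "x \<in> topspace (subtopology X W)" for x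
      using sum_pos that by force
  qed (use that cont_W F(1) in \<open>auto intro: continuous_map_sum\<close>)
  moreover have "weighted_average h A x = (\<Sum>\<alpha>\<in>F. c \<alpha> x *\<^sub>R \<alpha>)" if "x \<in> W" for x
  proof -
    have "(\<Sum>\<beta>\<in>{\<beta> \<in> A. h \<beta> x \<noteq> 0}. h \<beta> x) = (\<Sum>\<beta>\<in>F. h \<beta> x)"
      using F(1,2) F(3)[OF that] by (intro sum.mono_neutral_left) auto
    then show ?thesis
      unfolding weighted_average_def c_def using F(1,2) F(3)[OF that]
      by (simp only:) (intro sum.mono_neutral_left, auto)
  qed
  ultimately show "\<exists>W F c. openin X W \<and> x0 \<in> W \<and> finite F \<and> F \<subseteq> A \<and>
      (\<forall>\<alpha>\<in>F. continuous_map (subtopology X W) euclideanreal (c \<alpha>)) \<and>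
      (\<forall>y\<in>W. weighted_average h A y = (\<Sum>\<alpha>\<in>F. c \<alpha> y *\<^sub>R \<alpha>))"
    using W F by blast
qed

lemma cond_iii_imp_locally_finite_selection:
  fixes \<Phi> :: "'a \<Rightarrow> 'e::real_vector set"
  assumes "cond_iii X TYPE('e)"
    and "setvalued_into X S \<Phi>" "convex_valued X \<Phi>" "totally_lsc X \<Phi>"
  shows "\<exists>f. is_selection X \<Phi> f \<and> locally_finite_lincomb X S f"
proof -
  define U where "U y = {x \<in> topspace X. y \<in> \<Phi> x}" for y
  have "openin X {x \<in> topspace X. \<Phi> x \<inter> {y} \<noteq> {}}" for y
    using \<open>totally_lsc X \<Phi>\<close> unfolding totally_lsc_def by blast
  then have "openin X (U y)" for y
    by (simp add: U_def)
  moreover have "(\<Union>y\<in>S. U y) = topspace X"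
    using \<open>setvalued_into X S \<Phi>\<close> unfolding setvalued_into_def nonempty_valued_def U_def by blast
  ultimately obtain \<xi> where pu: "partition_of_unity X S \<xi>" and "index_subordinated X S \<xi> U"
    using \<open>cond_iii X TYPE('e)\<close> unfolding cond_iii_def open_cover_indexed_def by blast
  then have into: "\<And>y x. y \<in> S \<Longrightarrow> x \<in> topspace X \<Longrightarrow> \<xi> y x \<noteq> 0 \<Longrightarrow> y \<in> \<Phi> x"
    unfolding index_subordinated_def U_def by blast
  obtain h where h: "\<And>y. y \<in> S \<Longrightarrow> continuous_map X euclideanreal (h y)"
    "\<And>y x. 0 \<le> h y x" "locally_finite_family X S h"
    "\<And>x. x \<in> topspace X \<Longrightarrow> \<exists>y\<in>S. 0 < h y x"
    and supp: "\<And>y x. y \<in> S \<Longrightarrow> x \<in> topspace X \<Longrightarrow> h y x \<noteq> 0 \<Longrightarrow> \<xi> y x \<noteq> 0"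
    using partition_of_unity_locally_finite_shrink[OF pu] by blast
  have "weighted_average h S x \<in> \<Phi> x" if x: "x \<in> topspace X" for x
  proof -
    obtain y0 where "y0 \<in> S" "0 < h y0 x"
      using h(4)[OF x] by blast
    moreover have "finite {y \<in> S. h y x \<noteq> 0}"
      using h(3) x by (rule locally_finite_family_finite_support)
    ultimately show ?thesis
      using h(2) into supp x \<open>convex_valued X \<Phi>\<close> unfolding convex_valued_def
      by (intro weighted_average_in_convex) auto
  qed
  then show ?thesis
    using locally_finite_lincomb_weighted_average[OF h] unfolding is_selection_def by blast
qed

lemma cond_iii_imp_continuous_selection:
  fixes \<Phi> :: "'a \<Rightarrow> 'e::real_vector set"
  assumes "cond_iii X TYPE('e)"
    and "setvalued_into X S \<Phi>" "convex_valued X \<Phi>" "totally_lsc X \<Phi>"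
    and "\<And>W F c. finite F \<Longrightarrow> F \<subseteq> S \<Longrightarrow>
           (\<And>\<alpha>. \<alpha> \<in> F \<Longrightarrow> continuous_map (subtopology X W) euclideanreal (c \<alpha>)) \<Longrightarrow>
           continuous_map (subtopology X W) T (\<lambda>x. \<Sum>\<alpha>\<in>F. c \<alpha> x *\<^sub>R \<alpha>)"
  shows "\<exists>f. continuous_map X T f \<and> is_selection X \<Phi> f"
  using cond_iii_imp_locally_finite_selection[OF assms(1-4)]
    continuous_map_locally_finite_lincomb[OF _ assms(5)] by blast

section \<open>The cover simplex\<close>

definition cover_simplex :: "'i set \<Rightarrow> ('i \<Rightarrow> 'a set) \<Rightarrow> 'a \<Rightarrow> ('i \<Rightarrow> real) set" where
  "cover_simplex A U x =
     {y \<in> c00 A. (\<forall>\<alpha>. 0 \<le> y \<alpha>) \<and> (\<Sum>\<alpha>\<in>{\<alpha>. y \<alpha> \<noteq> 0}. y \<alpha>) = 1 \<and> (\<forall>\<alpha>. y \<alpha> \<noteq> 0 \<longrightarrow> x \<in> U \<alpha>)}"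

lemma setvalued_into_cover_simplex:
  assumes "open_cover_indexed X A U"
  shows "setvalued_into X (c00 A) (cover_simplex A U)"
  unfolding setvalued_into_def nonempty_valued_def
proof (intro conjI ballI)
  fix x assume "x \<in> topspace X"
  then obtain \<alpha> where "\<alpha> \<in> A" "x \<in> U \<alpha>"
    using assms unfolding open_cover_indexed_def by blast
  moreover have "{\<beta>. (if \<beta> = \<alpha> then 1 else 0 :: real) \<noteq> 0} = {\<alpha>}"
    by auto
  ultimately have "(\<lambda>\<beta>. if \<beta> = \<alpha> then 1 else 0) \<in> cover_simplex A U x"
    unfolding cover_simplex_def c00_def by auto
  then show "cover_simplex A U x \<noteq> {}"
    by blast
qed (simp add: cover_simplex_def)

lemma convex_valued_cover_simplex: "convex_valued X (cover_simplex A U)"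
  unfolding convex_valued_def
proof (intro ballI convexI)
  fix x y z and u v :: real
  assume y: "y \<in> cover_simplex A U x" and z: "z \<in> cover_simplex A U x"
    and "0 \<le> u" "0 \<le> v" "u + v = 1"
  let ?G = "{\<alpha>. y \<alpha> \<noteq> 0} \<union> {\<alpha>. z \<alpha> \<noteq> 0}"
  let ?w = "u *\<^sub>R y + v *\<^sub>R z"
  have "y \<in> c00 A" "z \<in> c00 A"
    using y z by (simp_all add: cover_simplex_def)
  then have "?w \<in> c00 A"
    by (simp add: subspace_c00 subspace_add subspace_scale)
  have "finite ?G"
    using \<open>y \<in> c00 A\<close> \<open>z \<in> c00 A\<close> by (simp add: c00_def)
  have sum_G: "(\<Sum>\<alpha>\<in>{\<alpha>. w \<alpha> \<noteq> 0}. w \<alpha>) = (\<Sum>\<alpha>\<in>?G. w \<alpha>)" if "{\<alpha>. w \<alpha> \<noteq> 0} \<subseteq> ?G" for w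
    using \<open>finite ?G\<close> that by (intro sum.mono_neutral_left) auto
  have supp_w: "{\<alpha>. ?w \<alpha> \<noteq> 0} \<subseteq> ?G"
    by (auto simp: scaleR_fun_def)
  have "(\<Sum>\<alpha>\<in>{\<alpha>. ?w \<alpha> \<noteq> 0}. ?w \<alpha>) = (\<Sum>\<alpha>\<in>?G. ?w \<alpha>)"
    by (rule sum_G[OF supp_w])
  also have "\<dots> = u * (\<Sum>\<alpha>\<in>?G. y \<alpha>) + v * (\<Sum>\<alpha>\<in>?G. z \<alpha>)"
    by (simp add: scaleR_fun_def sum.distrib sum_distrib_left)
  also have "\<dots> = 1"
    using y z sum_G[of y] sum_G[of z] \<open>u + v = 1\<close> by (simp add: cover_simplex_def)
  finally have "(\<Sum>\<alpha>\<in>{\<alpha>. ?w \<alpha> \<noteq> 0}. ?w \<alpha>) = 1" .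
  moreover have "0 \<le> ?w \<alpha>" for \<alpha>
    using y z \<open>0 \<le> u\<close> \<open>0 \<le> v\<close> by (simp add: scaleR_fun_def cover_simplex_def)
  moreover have "x \<in> U \<alpha>" if "?w \<alpha> \<noteq> 0" for \<alpha>
    using supp_w that y z by (auto simp: cover_simplex_def)
  ultimately show "?w \<in> cover_simplex A U x"
    using \<open>?w \<in> c00 A\<close> unfolding cover_simplex_def by blast
qed

lemma totally_lsc_cover_simplex:
  assumes "\<And>\<alpha>. \<alpha> \<in> A \<Longrightarrow> openin X (U \<alpha>)"
  shows "totally_lsc X (cover_simplex A U)"
  unfolding totally_lsc_def
proof
  fix V
  have "openin X {x \<in> topspace X. y \<in> cover_simplex A U x}" for y
  proof (cases "y \<in> c00 A \<and> (\<forall>\<alpha>. 0 \<le> y \<alpha>) \<and> (\<Sum>\<alpha>\<in>{\<alpha>. y \<alpha> \<noteq> 0}. y \<alpha>) = 1")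
    case True
    then have "{x \<in> topspace X. y \<in> cover_simplex A U x} = topspace X \<inter> (\<Inter>\<alpha>\<in>{\<alpha>. y \<alpha> \<noteq> 0}. U \<alpha>)"
      by (auto simp: cover_simplex_def)
    also have "openin X \<dots>"
      using True assms by (intro openin_Int_Inter) (auto simp: c00_def)
    finally show ?thesis .
  next
    case False
    then have "{x \<in> topspace X. y \<in> cover_simplex A U x} = {}"
      by (auto simp: cover_simplex_def)
    then show ?thesis
      by (simp only: openin_empty)
  qed
  moreover have "{x \<in> topspace X. cover_simplex A U x \<inter> V \<noteq> {}} = (\<Union>y\<in>V. {x \<in> topspace X. y \<in> cover_simplex A U x})"
    by blast
  ultimately show "openin X {x \<in> topspace X. cover_simplex A U x \<inter> V \<noteq> {}}"
    by auto
qed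

lemma cover_simplex_selection_partition_of_unity:
  assumes "is_selection X (cover_simplex A U) f"
    and "\<And>\<alpha>. continuous_map X euclideanreal (\<lambda>x. f x \<alpha>)"
  shows "partition_of_unity X A (\<lambda>\<alpha> x. f x \<alpha>) \<and> index_subordinated X A (\<lambda>\<alpha> x. f x \<alpha>) U"
proof -
  have f: "f x \<in> c00 A" "\<And>\<alpha>. 0 \<le> f x \<alpha>" "(\<Sum>\<alpha>\<in>{\<alpha>. f x \<alpha> \<noteq> 0}. f x \<alpha>) = 1"
    "\<And>\<alpha>. f x \<alpha> \<noteq> 0 \<Longrightarrow> x \<in> U \<alpha>" if "x \<in> topspace X" for x
    using assms(1) that unfolding is_selection_def cover_simplex_def by auto
  have "partition_of_unity X A (\<lambda>\<alpha> x. f x \<alpha>)"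
    unfolding partition_of_unity_def
  proof (intro conjI ballI)
    fix \<alpha> x assume x: "x \<in> topspace X"
    show "0 \<le> f x \<alpha>"
      using f(2)[OF x] .
    show "f x \<alpha> \<le> 1"
    proof (cases "f x \<alpha> = 0")
      case False
      then have "f x \<alpha> \<le> (\<Sum>\<alpha>\<in>{\<alpha>. f x \<alpha> \<noteq> 0}. f x \<alpha>)"
        using f(1,2)[OF x] by (intro member_le_sum) (auto simp: c00_def)
      then show ?thesis
        using f(3)[OF x] by simp
    qed simp
  next
    fix x assume x: "x \<in> topspace X"
    have "finite {\<alpha>. f x \<alpha> \<noteq> 0}" "{\<alpha>. f x \<alpha> \<noteq> 0} \<subseteq> A"
      using f(1)[OF x] by (simp_all add: c00_def)
    then show "countable {\<alpha> \<in> A. f x \<alpha> \<noteq> 0}"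
      by (auto intro: countable_finite elim: finite_subset[rotated])
    show "((\<lambda>\<alpha>. f x \<alpha>) has_sum 1) A"
      by (rule has_sum_finite_neutralI[of "{\<alpha>. f x \<alpha> \<noteq> 0}"])
         (use \<open>finite _\<close> \<open>_ \<subseteq> A\<close> f(3)[OF x] in auto)
  qed (rule assms(2))
  moreover have "index_subordinated X A (\<lambda>\<alpha> x. f x \<alpha>) U"
    unfolding index_subordinated_def using f(4) by blast
  ultimately show ?thesis
    by blast
qed

lemma cond_iii_if_cover_simplex_selections:
  fixes T :: "'i set \<Rightarrow> ('i \<Rightarrow> real) topology"
  assumes coordinate: "\<And>A \<alpha>. continuous_map (T A) euclideanreal (\<lambda>y. y \<alpha>)"
    and selection: "\<And>A. \<forall>\<Phi>. setvalued_into X (c00 A) \<Phi> \<and> convex_valued X \<Phi> \<and> totally_lsc X \<Phi> \<longrightarrow>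
          (\<exists>f. continuous_map X (T A) f \<and> is_selection X \<Phi> f)"
  shows "cond_iii X TYPE('i)"
  unfolding cond_iii_def
proof (intro allI impI)
  fix A :: "'i set" and U assume cover: "open_cover_indexed X A U"
  then have "totally_lsc X (cover_simplex A U)"
    by (simp add: totally_lsc_cover_simplex open_cover_indexed_def)
  then obtain f where "continuous_map X (T A) f" "is_selection X (cover_simplex A U) f"
    using selection setvalued_into_cover_simplex[OF cover] convex_valued_cover_simplex by blast
  moreover from this(1) have "continuous_map X euclideanreal (\<lambda>x. f x \<alpha>)" for \<alpha>
    using continuous_map_compose[OF _ coordinate] by (simp add: o_def)
  ultimately show "\<exists>\<xi>. partition_of_unity X A \<xi> \<and> index_subordinated X A \<xi> U"
    using cover_simplex_selection_partition_of_unity by blast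
qed

theorem theorem4p2:
  fixes X :: "'a topology"
  assumes "Hausdorff_space X"
  shows "(cond_i X TYPE('i \<Rightarrow> real) \<longrightarrow> cond_ii X TYPE('i))
       \<and> (cond_ii X TYPE('i) \<longrightarrow> cond_iii X TYPE('i))
       \<and> (cond_iii X TYPE('e::real_vector) \<longrightarrow> cond_i X TYPE('e))
       \<and> (cond_iii X TYPE('e) \<longrightarrow> cond_iv X TYPE('e))
       \<and> (cond_iv X TYPE('i \<Rightarrow> real) \<longrightarrow> cond_iii X TYPE('i))"
proof (intro conjI impI)
  show "cond_i X TYPE('i \<Rightarrow> real) \<Longrightarrow> cond_ii X TYPE('i)"
    unfolding cond_i_def cond_ii_def using is_tvs_c00 by blast
next
  assume "cond_ii X TYPE('i)"
  then show "cond_iii X TYPE('i)"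
    by (intro cond_iii_if_cover_simplex_selections[where T=c00_topology] continuous_map_c00_coordinate)
       (simp add: cond_ii_def)
next
  assume "cond_iv X TYPE('i \<Rightarrow> real)"
  then show "cond_iii X TYPE('i)"
    by (intro cond_iii_if_cover_simplex_selections[where T="\<lambda>A. finite_topology (c00 A)"]
          continuous_map_finite_topology_linear linear_coordinate)
       (simp add: cond_iv_def subspace_c00)
next
  assume iii: "cond_iii X TYPE('e)"
  show "cond_i X TYPE('e)"
    unfolding cond_i_def
  proof (intro allI impI)
    fix S :: "'e set" and T \<Phi>
    assume "is_tvs S T" "setvalued_into X S \<Phi> \<and> convex_valued X \<Phi> \<and> totally_lsc X \<Phi>"
    then show "\<exists>f. continuous_map X T f \<and> is_selection X \<Phi> f"
      by (intro cond_iii_imp_continuous_selection[OF iii] continuous_map_tvs_lincomb) auto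
  qed
  show "cond_iv X TYPE('e)"
    unfolding cond_iv_def
  proof (intro allI impI)
    fix S :: "'e set" and \<Phi>
    assume "subspace S" "setvalued_into X S \<Phi> \<and> convex_valued X \<Phi> \<and> totally_lsc X \<Phi>"
    then show "\<exists>f. continuous_map X (finite_topology S) f \<and> is_selection X \<Phi> f"
      by (intro cond_iii_imp_continuous_selection[OF iii] continuous_map_finite_topology_lincomb) auto
  qed
qed

end
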